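(* During the Part I procedure, suppose a bridge step processes the edge $xy$ and forms a blossom. Let $v$ be a vertex that was odd before this step and lies on the tree path from (the blossom containing) $y$ to the base of the newly formed blossom, and let $uv\notin M$ be an edge with $u$ even (possibly $u$ in a different tree). Then $v$ becomes even in this step, and $\mathrm{lcp}(x)+\mathrm{lcp}(y)\le \mathrm{lcp}(v)+\mathrm{lcp}(u)$.
   Context: Let $G=(V,E)$ be a finite undirected graph and $M$ a matching in $G$; free vertices and $\mathit{mate}(v)$ are as usual. The Part I procedure maintains a search structure $S$: a forest whose nodes are either single (odd) vertices or blossoms (disjoint vertex sets with a distinguished base vertex), each tree rooted at a blossom containing a free vertex. Vertices in $S$ are labelled even (those in blossoms) or odd; vertices not in $S$ are unlabelled. A vertex is born even/odd according to the label it receives when inserted. The procedure maintains $\mathrm{lcp}(v)$ for even vertices and $\mathrm{lcp}_{\mathrm{odd}}(v)$ for vertices born odd. The blossom nodes currently in $S$ are the maximal blossoms. Phase $0$: every free vertex $v$ becomes the root of its own tree as a trivial blossom $\{v\}$ with base $v$, even, $\mathrm{lcp}(v)=0$. For $\Delta=1,2,\dots$, phase $\Delta$ does: (i) if $\Delta$ is even, growth steps: while some even vertex $v$ with $\mathrm{lcp}(v)=\Delta-2$ has a neighbour $x$ not in $S$, add $x$ as an odd child of the blossom containing $v$ with $\mathrm{lcp}_{\mathrm{odd}}(x)=\Delta-1$, and $\mathit{mate}(x)$ as a child of $x$, as a trivial even blossom with $\mathrm{lcp}(\mathit{mate}(x))=\Delta$; (ii) bridge steps: while there is a non-matching edge $xy$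 with $x,y$ even, in different maximal blossoms $B_x,B_y$, and $\mathrm{lcp}(x)+\mathrm{lcp}(y)=2\Delta-2$: if $B_x,B_y$ lie in different trees the procedure stops; otherwise let $B$ be the lowest common ancestor of $B_x,B_y$; every odd vertex $z$ on the tree paths from $B_x$ and $B_y$ to $B$ becomes even with $\mathrm{lcp}(z)=\mathrm{lcp}(x)+1+\mathrm{lcp}(y)-\mathrm{lcp}_{\mathrm{odd}}(z)$, and $B$ together with all blossoms and odd vertices on both paths is merged into one new blossom with base equal to the base of $B$, replacing $B$ in the tree. *)

theory Defs
  imports Main
begin

definition graph :: "'a set \<Rightarrow> 'a set set \<Rightarrow> bool" where
  "graph V E \<longleftrightarrow> finite V \<and> (\<forall>e\<in>E. \<exists>a b. e = {a, b} \<and> a \<noteq> b \<and> a \<in> V \<and> b \<in> V)"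

definition matching :: "'a set set \<Rightarrow> 'a set set \<Rightarrow> bool" where
  "matching E M \<longleftrightarrow> M \<subseteq> E \<and> (\<forall>e1\<in>M. \<forall>e2\<in>M. e1 \<noteq> e2 \<longrightarrow> e1 \<inter> e2 = {})"

definition free :: "'a set \<Rightarrow> 'a set set \<Rightarrow> 'a \<Rightarrow> bool" where
  "free V M v \<longleftrightarrow> v \<in> V \<and> (\<forall>e\<in>M. v \<notin> e)"

definition mate :: "'a set set \<Rightarrow> 'a \<Rightarrow> 'a" where
  "mate M v = (THE u. {v, u} \<in> M)"

text \<open>Nodes of the forest: Inl z is a single (odd) vertex z, Inr B is a blossom B.\<close>
type_synonym 'a node = "'a + 'a set"

datatype stage = Grow | Bridge | Stopped

text \<open>State of the Part I procedure: the nodes of S, parent pointers, bases of blossoms,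
  lcp (even vertices), lcp_odd (vertices born odd), current phase Delta and the sub-stage
  of the current phase (growth steps / bridge steps / procedure stopped).\<close>
record 'a sstate =
  nodes :: "'a node set"
  par :: "'a node \<Rightarrow> 'a node option"
  bse :: "'a set \<Rightarrow> 'a"
  lcp :: "'a \<Rightarrow> nat"
  lcpo :: "'a \<Rightarrow> nat"
  delta :: nat
  stg :: stage

definition oddV :: "('a, 'b) sstate_scheme \<Rightarrow> 'a set" where
  "oddV s = {v. Inl v \<in> nodes s}"

definition blossoms :: "('a, 'b) sstate_scheme \<Rightarrow> 'a set set" where
  "blossoms s = {B. Inr B \<in> nodes s}"

definition evenV :: "('a, 'b) sstate_scheme \<Rightarrow> 'a set" where
  "evenV s = \<Union> (blossoms s)"

definition inS :: "('a, 'b) sstate_scheme \<Rightarrow> 'a set" where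
  "inS s = oddV s \<union> evenV s"

definition blossom_of :: "('a, 'b) sstate_scheme \<Rightarrow> 'a \<Rightarrow> 'a set" where
  "blossom_of s v = (THE B. B \<in> blossoms s \<and> v \<in> B)"

definition node_set :: "'a node \<Rightarrow> 'a set" where
  "node_set n = (case n of Inl z \<Rightarrow> {z} | Inr B \<Rightarrow> B)"

definition node_base :: "('a, 'b) sstate_scheme \<Rightarrow> 'a node \<Rightarrow> 'a" where
  "node_base s n = (case n of Inl z \<Rightarrow> z | Inr B \<Rightarrow> bse s B)"

definition anc :: "('a, 'b) sstate_scheme \<Rightarrow> 'a node \<Rightarrow> 'a node \<Rightarrow> bool" where
  "anc s n m \<longleftrightarrow> (n, m) \<in> {(p, q). p \<in> nodes s \<and> par s p = Some q}\<^sup>*"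

definition lca :: "('a, 'b) sstate_scheme \<Rightarrow> 'a node \<Rightarrow> 'a node \<Rightarrow> 'a node" where
  "lca s a b = (THE c. anc s a c \<and> anc s b c \<and> (\<forall>d. anc s a d \<and> anc s b d \<longrightarrow> anc s c d))"

definition tpath :: "('a, 'b) sstate_scheme \<Rightarrow> 'a node \<Rightarrow> 'a node \<Rightarrow> 'a node set" where
  "tpath s a c = {n. anc s a n \<and> anc s n c}"

definition same_tree :: "('a, 'b) sstate_scheme \<Rightarrow> 'a \<Rightarrow> 'a \<Rightarrow> bool" where
  "same_tree s x y \<longleftrightarrow>
     (\<exists>c. anc s (Inr (blossom_of s x)) c \<and> anc s (Inr (blossom_of s y)) c)"

definition init :: "'a set \<Rightarrow> 'a set set \<Rightarrow> 'a sstate" where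
  "init V M = \<lparr> nodes = {Inr {v} | v. free V M v}, par = (\<lambda>_. None), bse = the_elem,
      lcp = (\<lambda>_. 0), lcpo = (\<lambda>_. 0), delta = 1, stg = Grow \<rparr>"

definition growth_enabled :: "'a set set \<Rightarrow> 'a sstate \<Rightarrow> 'a \<Rightarrow> 'a \<Rightarrow> bool" where
  "growth_enabled E s v x \<longleftrightarrow> even (delta s) \<and> v \<in> evenV s \<and> lcp s v + 2 = delta s
      \<and> {v, x} \<in> E \<and> x \<notin> inS s"

definition grow :: "'a set set \<Rightarrow> 'a sstate \<Rightarrow> 'a \<Rightarrow> 'a \<Rightarrow> 'a sstate" where
  "grow M s v x = s\<lparr> nodes := nodes s \<union> {Inl x, Inr {mate M x}},
      par := (par s)(Inl x := Some (Inr (blossom_of s v)), Inr {mate M x} := Some (Inl x)),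
      bse := (bse s)({mate M x} := mate M x),
      lcpo := (lcpo s)(x := delta s - 1),
      lcp := (lcp s)(mate M x := delta s) \<rparr>"

definition bridge_enabled :: "'a set set \<Rightarrow> 'a set set \<Rightarrow> 'a sstate \<Rightarrow> 'a \<Rightarrow> 'a \<Rightarrow> bool" where
  "bridge_enabled E M s x y \<longleftrightarrow> {x, y} \<in> E \<and> {x, y} \<notin> M \<and> x \<in> evenV s \<and> y \<in> evenV s
      \<and> blossom_of s x \<noteq> blossom_of s y \<and> lcp s x + lcp s y + 2 = 2 * delta s"

definition merge :: "'a sstate \<Rightarrow> 'a \<Rightarrow> 'a \<Rightarrow> 'a sstate" where
  "merge s x y =
    (let a = Inr (blossom_of s x); b = Inr (blossom_of s y); c = lca s a b;
         P = tpath s a c \<union> tpath s b c;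
         Z = {z. Inl z \<in> P};
         N = \<Union> (node_set ` P)
     in s\<lparr> nodes := (nodes s - P) \<union> {Inr N},
           par := (\<lambda>n. if n = Inr N then par s c
                       else (case par s n of None \<Rightarrow> None
                             | Some p \<Rightarrow> if p \<in> P then Some (Inr N) else Some p)),
           bse := (bse s)(N := node_base s c),
           lcp := (\<lambda>z. if z \<in> Z then lcp s x + 1 + lcp s y - lcpo s z else lcp s z) \<rparr>)"

inductive step :: "'a set set \<Rightarrow> 'a set set \<Rightarrow> 'a sstate \<Rightarrow> 'a sstate \<Rightarrow> bool"
  for E M where
  growth: "stg s = Grow \<Longrightarrow> growth_enabled E s v x \<Longrightarrow> step E M s (grow M s v x)"
| growth_done: "stg s = Grow \<Longrightarrow> \<not> (\<exists>v x. growth_enabled E s v x) \<Longrightarrow>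
      step E M s (s\<lparr>stg := Bridge\<rparr>)"
| bridge_stop: "stg s = Bridge \<Longrightarrow> bridge_enabled E M s x y \<Longrightarrow> \<not> same_tree s x y \<Longrightarrow>
      step E M s (s\<lparr>stg := Stopped\<rparr>)"
| bridge_merge: "stg s = Bridge \<Longrightarrow> bridge_enabled E M s x y \<Longrightarrow> same_tree s x y \<Longrightarrow>
      step E M s (merge s x y)"
| next_phase: "stg s = Bridge \<Longrightarrow> \<not> (\<exists>x y. bridge_enabled E M s x y) \<Longrightarrow>
      step E M s (s\<lparr>delta := delta s + 1, stg := Grow\<rparr>)"

inductive reachable :: "'a set \<Rightarrow> 'a set set \<Rightarrow> 'a set set \<Rightarrow> 'a sstate \<Rightarrow> bool"
  for V E M where
  start: "reachable V E M (init V M)"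
| continue: "reachable V E M s \<Longrightarrow> step E M s s' \<Longrightarrow> reachable V E M s'"

end

theory Submission
  imports Defs
begin

(* Two invariants of reachable states carry the argument: lcp_odd(z) < Delta for every vertex z,
  and lcp_odd(v) <= lcp(u) + 1 for every edge uv with u even and v odd.  The second holds because
  a vertex becomes odd in phase Delta only if it is still unlabelled after the growth steps of the
  earlier phases, so its even neighbours have lcp >= Delta - 2, while a vertex z made even by a
  bridge step gets lcp(z) = 2 Delta - 1 - lcp_odd(z) >= Delta.  In the bridge step of the theorem
  lcp(x) + lcp(y) = 2 Delta - 2 and lcp(v) = 2 Delta - 1 - lcp_odd(v): if u stays outside the new
  blossom the edge invariant gives the bound, and if u also becomes even then lcp(u), lcp(v) >= Delta.  The invariants become
  inductive once strengthened by the parity of the labels, acyclicity of the parent pointers,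
  disjointness of the blossoms and closure of S under mates. *)

lemma matched_mate:
  assumes "graph V E" "matching E M" "e \<in> M" "z \<in> e"
  shows "e = {z, mate M z}" "mate M z \<noteq> z" "mate M (mate M z) = z"
proof -
  have "e \<in> E" using assms(2,3) unfolding matching_def by blast
  then have "\<exists>a b. e = {a, b} \<and> a \<noteq> b \<and> a \<in> V \<and> b \<in> V" using assms(1) unfolding graph_def by simp
  then obtain a b where ab: "e = {a, b}" "a \<noteq> b" by blast
  define m where "m = (if z = a then b else a)"
  have em: "e = {z, m}" "m \<noteq> z" using ab assms(4) unfolding m_def by auto
  have only_e: "{w, w'} = e" if "{w, w'} \<in> M" "w \<in> e" for w w'
  proof (rule ccontr)
    assume "{w, w'} \<noteq> e"
    then have "{w, w'} \<inter> e = {}" using assms(2,3) that(1) unfolding matching_def by simp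
    then show False using that(2) by simp
  qed
  have "mate M z = m" unfolding mate_def
  proof (rule the_equality)
    show "{z, m} \<in> M" using em assms(3) by simp
    show "w = m" if "{z, w} \<in> M" for w
      using only_e[OF that assms(4)] em by (auto simp: doubleton_eq_iff)
  qed
  moreover have "mate M m = z" unfolding mate_def
  proof (rule the_equality)
    show "{m, z} \<in> M" using em assms(3) by (simp add: insert_commute)
    show "w = z" if "{m, w} \<in> M" for w
      using only_e[OF that] em by (auto simp: doubleton_eq_iff)
  qed
  ultimately show "e = {z, mate M z}" "mate M z \<noteq> z" "mate M (mate M z) = z"
    using em by simp_all
qed

definition parent_rel :: "('a, 'b) sstate_scheme \<Rightarrow> ('a node \<times> 'a node) set" where
  "parent_rel s = {(p, q). p \<in> nodes s \<and> par s p = Some q}"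

lemma anc_iff_parent_rel: "anc s n m \<longleftrightarrow> (n, m) \<in> (parent_rel s)\<^sup>*"
  unfolding anc_def parent_rel_def ..

definition parent_closed :: "('a, 'b) sstate_scheme \<Rightarrow> bool" where
  "parent_closed s \<longleftrightarrow> (\<forall>p\<in>nodes s. \<forall>q. par s p = Some q \<longrightarrow> q \<in> nodes s)"

definition ranked :: "('a, 'b) sstate_scheme \<Rightarrow> ('a node \<Rightarrow> nat) \<Rightarrow> bool" where
  "ranked s h \<longleftrightarrow> (\<forall>p\<in>nodes s. \<forall>q. par s p = Some q \<longrightarrow> h q < h p)"

lemma anc_in_nodes:
  assumes "parent_closed s" "anc s n m" "n \<in> nodes s"
  shows "m \<in> nodes s"
proof -
  have "(n, m) \<in> (parent_rel s)\<^sup>*" using assms(2) unfolding anc_iff_parent_rel .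
  then show ?thesis
    using assms(1,3) by (induction rule: rtrancl_induct) (auto simp: parent_closed_def parent_rel_def)
qed

lemma anc_rank_less:
  assumes "ranked s h" "anc s n m"
  shows "n = m \<or> h m < h n"
proof -
  have "(n, m) \<in> (parent_rel s)\<^sup>*" using assms(2) unfolding anc_iff_parent_rel .
  then show ?thesis
    using assms(1) by (induction rule: rtrancl_induct) (auto simp: ranked_def parent_rel_def)
qed

lemma anc_lca:
  assumes h: "ranked s h" and "anc s a d" "anc s b d"
  shows "anc s a (lca s a b)" "anc s b (lca s a b)"
proof -
  let ?common = "\<lambda>d. anc s a d \<and> anc s b d"
  have "h d < Suc (h a)" if "?common d" for d using anc_rank_less[OF h] that by fastforce
  then obtain c where c: "?common c" "\<And>d. ?common d \<Longrightarrow> h d \<le> h c"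
    using ex_has_greatest_nat[of ?common d h "Suc (h a)"] assms(2,3) by blast
  have sv: "single_valued (parent_rel s)" unfolding parent_rel_def single_valued_def by auto
  \<comment> \<open>ancestors of a node form a chain, so the common ancestor of largest rank is the lowest one\<close>
  have lowest: "anc s c d" if "?common d" for d
  proof -
    have "anc s c d \<or> anc s d c"
      using single_valued_confluent[OF sv] c(1) that unfolding anc_iff_parent_rel by blast
    then show ?thesis using anc_rank_less[OF h, of d c] c(2)[OF that] by auto
  qed
  have "lca s a b = c" unfolding lca_def
  proof (rule the_equality)
    show "anc s a c \<and> anc s b c \<and> (\<forall>d. ?common d \<longrightarrow> anc s c d)" using c(1) lowest by blast
    fix c' assume "anc s a c' \<and> anc s b c' \<and> (\<forall>d. ?common d \<longrightarrow> anc s c' d)"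
    then have "anc s c' c" "anc s c c'" using c(1) lowest by blast+
    then show "c' = c" using anc_rank_less[OF h, of c' c] anc_rank_less[OF h, of c c'] by auto
  qed
  then show "anc s a (lca s a b)" "anc s b (lca s a b)" using c(1) by simp_all
qed

lemma blossom_of_eq:
  assumes "pairwise disjnt (blossoms s)" "B \<in> blossoms s" "u \<in> B"
  shows "blossom_of s u = B"
  unfolding blossom_of_def
  by (rule the_equality) (use assms in \<open>auto simp: pairwise_def disjnt_iff\<close>)

lemma blossom_of_mem:
  assumes "pairwise disjnt (blossoms s)" "u \<in> evenV s"
  shows "blossom_of s u \<in> blossoms s" "u \<in> blossom_of s u"
  using assms blossom_of_eq unfolding evenV_def by fastforce+

definition labels_disjoint :: "('a, 'b) sstate_scheme \<Rightarrow> bool" where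
  "labels_disjoint s \<longleftrightarrow> oddV s \<inter> evenV s = {} \<and> pairwise disjnt (blossoms s)"

definition lcp_wf :: "('a, 'b) sstate_scheme \<Rightarrow> bool" where
  "lcp_wf s \<longleftrightarrow> (\<forall>z. lcpo s z < delta s) \<and> (\<forall>u\<in>evenV s. even (lcp s u))
     \<and> (\<forall>z\<in>oddV s. odd (lcpo s z))"

definition S_mate_closed :: "'a set \<Rightarrow> 'a set set \<Rightarrow> ('a, 'b) sstate_scheme \<Rightarrow> bool" where
  "S_mate_closed V M s \<longleftrightarrow> (\<forall>v. free V M v \<longrightarrow> v \<in> inS s)
     \<and> (\<forall>z\<in>inS s. (\<exists>e\<in>M. z \<in> e) \<longrightarrow> mate M z \<in> inS s)"

text \<open>The growth steps of phase lcp u + 2 add every unlabelled neighbour of an even vertex u to S.\<close>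
definition scanned :: "('a, 'b) sstate_scheme \<Rightarrow> 'a \<Rightarrow> bool" where
  "scanned s u \<longleftrightarrow> lcp s u + 2 < delta s \<or> (lcp s u + 2 = delta s \<and> stg s \<noteq> Grow)"

definition scanned_closed :: "'a set set \<Rightarrow> ('a, 'b) sstate_scheme \<Rightarrow> bool" where
  "scanned_closed E s \<longleftrightarrow> (\<forall>u\<in>evenV s. scanned s u \<longrightarrow> (\<forall>w. {u, w} \<in> E \<longrightarrow> w \<in> inS s))"

definition odd_lcpo_bound :: "'a set set \<Rightarrow> ('a, 'b) sstate_scheme \<Rightarrow> bool" where
  "odd_lcpo_bound E s \<longleftrightarrow> (\<forall>u\<in>evenV s. \<forall>v\<in>oddV s. {u, v} \<in> E \<longrightarrow> lcpo s v \<le> lcp s u + 1)"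

definition invar :: "'a set \<Rightarrow> 'a set set \<Rightarrow> 'a set set \<Rightarrow> 'a sstate \<Rightarrow> bool" where
  "invar V E M s \<longleftrightarrow> parent_closed s \<and> (\<exists>h. ranked s h) \<and> labels_disjoint s \<and> lcp_wf s
     \<and> S_mate_closed V M s \<and> scanned_closed E s \<and> odd_lcpo_bound E s"

lemmas invar_defs = invar_def parent_closed_def ranked_def labels_disjoint_def lcp_wf_def
  S_mate_closed_def scanned_closed_def scanned_def odd_lcpo_bound_def

lemma labels_update_stg [simp]:
  "oddV (s\<lparr>stg := t\<rparr>) = oddV s" "blossoms (s\<lparr>stg := t\<rparr>) = blossoms s"
  "evenV (s\<lparr>stg := t\<rparr>) = evenV s" "inS (s\<lparr>stg := t\<rparr>) = inS s"
  by (simp_all add: oddV_def blossoms_def evenV_def inS_def)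

lemma labels_update_delta [simp]:
  "oddV (s\<lparr>delta := d\<rparr>) = oddV s" "blossoms (s\<lparr>delta := d\<rparr>) = blossoms s"
  "evenV (s\<lparr>delta := d\<rparr>) = evenV s" "inS (s\<lparr>delta := d\<rparr>) = inS s"
  by (simp_all add: oddV_def blossoms_def evenV_def inS_def)

lemma invar_init: "invar V E M (init V M)"
proof -
  have "oddV (init V M) = {}" "blossoms (init V M) = {{v} | v. free V M v}"
    by (auto simp: oddV_def blossoms_def init_def)
  moreover have "evenV (init V M) = {v. free V M v}" "inS (init V M) = {v. free V M v}"
    using calculation by (auto simp: evenV_def inS_def)
  ultimately show ?thesis
    by (auto simp: invar_defs pairwise_def disjnt_def free_def) (auto simp: init_def)
qed

lemma invar_stop:
  assumes "invar V E M s" "stg s = Bridge"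
  shows "invar V E M (s\<lparr>stg := Stopped\<rparr>)"
  using assms by (simp add: invar_defs)

lemma invar_growth_done:
  assumes inv: "invar V E M s" and "stg s = Grow" and none: "\<nexists>v x. growth_enabled E s v x"
  shows "invar V E M (s\<lparr>stg := Bridge\<rparr>)"
proof -
  have "w \<in> inS s" if u: "u \<in> evenV s" "lcp s u + 2 = delta s" "{u, w} \<in> E" for u w
  proof (rule ccontr)
    assume "w \<notin> inS s"
    moreover have "even (delta s)" using inv u(1,2) unfolding invar_defs by (metis even_add even_numeral)
    ultimately have "growth_enabled E s u w" using u unfolding growth_enabled_def by simp
    with none show False by blast
  qed
  with inv show ?thesis by (auto simp: invar_defs)
qed

lemma invar_next_phase:
  assumes "invar V E M s" "stg s = Bridge"
  shows "invar V E M (s\<lparr>delta := delta s + 1, stg := Grow\<rparr>)"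
  using assms by (auto simp: invar_defs less_Suc_eq)

lemma grow_fields [simp]:
  "nodes (grow M s v x) = nodes s \<union> {Inl x, Inr {mate M x}}"
  "par (grow M s v x) = (par s)(Inl x := Some (Inr (blossom_of s v)), Inr {mate M x} := Some (Inl x))"
  "lcp (grow M s v x) = (lcp s)(mate M x := delta s)"
  "lcpo (grow M s v x) = (lcpo s)(x := delta s - 1)"
  "delta (grow M s v x) = delta s" "stg (grow M s v x) = stg s"
  by (simp_all add: grow_def)

lemma labels_grow:
  "oddV (grow M s v x) = insert x (oddV s)"
  "blossoms (grow M s v x) = insert {mate M x} (blossoms s)"
  "evenV (grow M s v x) = insert (mate M x) (evenV s)"
  "inS (grow M s v x) = inS s \<union> {x, mate M x}"
  by (auto simp: oddV_def blossoms_def evenV_def inS_def)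

lemma growth_fresh:
  assumes "graph V E" "matching E M" "S_mate_closed V M s" "growth_enabled E s v x"
  shows "x \<notin> inS s" "mate M x \<notin> inS s" "mate M x \<noteq> x" "mate M (mate M x) = x"
proof -
  have vx: "{v, x} \<in> E" and x: "x \<notin> inS s" using assms(4) unfolding growth_enabled_def by auto
  have "x \<in> V" using assms(1) vx unfolding graph_def by (metis doubleton_eq_iff)
  with x assms(3) obtain e where "e \<in> M" "x \<in> e" unfolding S_mate_closed_def free_def by blast
  then have "mate M x \<noteq> x" "mate M (mate M x) = x" using matched_mate[OF assms(1,2)] by simp_all
  moreover have "mate M x \<notin> inS s"
  proof
    assume "mate M x \<in> inS s"
    moreover have "\<exists>e\<in>M. mate M x \<in> e" using matched_mate[OF assms(1,2) \<open>e \<in> M\<close> \<open>x \<in> e\<close>] \<open>e \<in> M\<close> by auto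
    ultimately have "x \<in> inS s" using assms(3) \<open>mate M (mate M x) = x\<close> unfolding S_mate_closed_def by metis
    with x show False ..
  qed
  ultimately show "x \<notin> inS s" "mate M x \<notin> inS s" "mate M x \<noteq> x" "mate M (mate M x) = x"
    using x by simp_all
qed

lemma forest_grow:
  assumes "parent_closed s" "ranked s h" "Inl x \<notin> nodes s" "Inr {mate M x} \<notin> nodes s"
    and "Inr (blossom_of s v) \<in> nodes s"
  defines "r \<equiv> h (Inr (blossom_of s v))"
  shows "parent_closed (grow M s v x)"
    "ranked (grow M s v x) (h(Inl x := r + 1, Inr {mate M x} := r + 2))"
  using assms unfolding parent_closed_def ranked_def by auto

lemma invar_grow:
  assumes g: "graph V E" and mt: "matching E M" and inv: "invar V E M s"
    and st: "stg s = Grow" and en: "growth_enabled E s v x"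
  shows "invar V E M (grow M s v x)"
proof -
  let ?m = "mate M x" and ?s' = "grow M s v x"
  from inv obtain h where pc: "parent_closed s" and rk: "ranked s h" and ld: "labels_disjoint s"
    and lw: "lcp_wf s" and sm: "S_mate_closed V M s" and sc: "scanned_closed E s"
    and ob: "odd_lcpo_bound E s" unfolding invar_def by blast
  have fresh: "x \<notin> inS s" "?m \<notin> inS s" "?m \<noteq> x" "mate M ?m = x"
    using growth_fresh[OF g mt sm en] by simp_all
  then have fresh_nodes: "Inl x \<notin> nodes s" "Inr {?m} \<notin> nodes s"
    unfolding inS_def oddV_def evenV_def blossoms_def by auto
  have v: "v \<in> evenV s" "lcp s v + 2 = delta s" "even (delta s)"
    using en unfolding growth_enabled_def by simp_all
  have "Inr (blossom_of s v) \<in> nodes s"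
    using blossom_of_mem(1)[OF _ v(1)] ld unfolding labels_disjoint_def blossoms_def by simp
  with forest_grow[OF pc rk fresh_nodes] have forest: "parent_closed ?s'" "\<exists>h. ranked ?s' h"
    by blast+
  have "labels_disjoint ?s'"
    using ld fresh unfolding labels_disjoint_def labels_grow inS_def evenV_def
    by (auto simp: pairwise_insert disjnt_def)
  moreover have "lcp_wf ?s'"
    using lw fresh v(2,3) unfolding lcp_wf_def labels_grow inS_def by auto
  moreover have "S_mate_closed V M ?s'"
    using sm fresh unfolding S_mate_closed_def labels_grow by auto
  moreover have "scanned_closed E ?s'"
    using sc fresh st unfolding scanned_closed_def scanned_def labels_grow inS_def by auto
  moreover have "odd_lcpo_bound E ?s'"
    unfolding odd_lcpo_bound_def labels_grow
  proof (intro ballI impI)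
    fix u w assume u: "u \<in> insert ?m (evenV s)" and w: "w \<in> insert x (oddV s)" and uw: "{u, w} \<in> E"
    have "lcpo s w < delta s" using lw unfolding lcp_wf_def by blast
    moreover have "\<not> scanned s u" if "u \<in> evenV s" "w = x"
      using sc that uw fresh(1) unfolding scanned_closed_def by blast
    ultimately show "lcpo ?s' w \<le> lcp ?s' u + 1"
      using u w uw ob fresh st unfolding odd_lcpo_bound_def scanned_def inS_def by auto
  qed
  ultimately show ?thesis using forest unfolding invar_def by blast
qed

definition bridge_top :: "('a, 'b) sstate_scheme \<Rightarrow> 'a \<Rightarrow> 'a \<Rightarrow> 'a node" where
  "bridge_top s x y = lca s (Inr (blossom_of s x)) (Inr (blossom_of s y))"

definition bridge_path :: "('a, 'b) sstate_scheme \<Rightarrow> 'a \<Rightarrow> 'a \<Rightarrow> 'a node set" where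
  "bridge_path s x y = tpath s (Inr (blossom_of s x)) (bridge_top s x y)
     \<union> tpath s (Inr (blossom_of s y)) (bridge_top s x y)"

definition bridge_blossom :: "('a, 'b) sstate_scheme \<Rightarrow> 'a \<Rightarrow> 'a \<Rightarrow> 'a set" where
  "bridge_blossom s x y = \<Union> (node_set ` bridge_path s x y)"

lemma merge_fields [simp]:
  "nodes (merge s x y) = nodes s - bridge_path s x y \<union> {Inr (bridge_blossom s x y)}"
  "par (merge s x y) = (\<lambda>n. if n = Inr (bridge_blossom s x y) then par s (bridge_top s x y)
     else (case par s n of None \<Rightarrow> None
           | Some p \<Rightarrow> if p \<in> bridge_path s x y then Some (Inr (bridge_blossom s x y)) else Some p))"
  "lcp (merge s x y) = (\<lambda>z. if Inl z \<in> bridge_path s x y then lcp s x + 1 + lcp s y - lcpo s z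
     else lcp s z)"
  "lcpo (merge s x y) = lcpo s" "delta (merge s x y) = delta s" "stg (merge s x y) = stg s"
  unfolding merge_def Let_def bridge_top_def[symmetric] bridge_path_def[symmetric]
    bridge_blossom_def[symmetric]
  by simp_all

lemma labels_merge:
  "oddV (merge s x y) = oddV s - {z. Inl z \<in> bridge_path s x y}"
  "blossoms (merge s x y)
     = insert (bridge_blossom s x y) {B \<in> blossoms s. Inr B \<notin> bridge_path s x y}"
  by (auto simp: oddV_def blossoms_def)

lemma bridge_blossom_subset:
  assumes "bridge_path s x y \<subseteq> nodes s"
  shows "bridge_blossom s x y \<subseteq> evenV s \<union> {z. Inl z \<in> bridge_path s x y}"
proof
  fix z assume "z \<in> bridge_blossom s x y"
  then obtain n where n: "n \<in> bridge_path s x y" "z \<in> node_set n" unfolding bridge_blossom_def by blast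
  with assms show "z \<in> evenV s \<union> {z. Inl z \<in> bridge_path s x y}"
    by (cases n) (auto simp: node_set_def evenV_def blossoms_def)
qed

lemma evenV_merge:
  assumes "bridge_path s x y \<subseteq> nodes s"
  shows "evenV (merge s x y) = evenV s \<union> {z. Inl z \<in> bridge_path s x y}"
proof -
  have "B \<subseteq> bridge_blossom s x y" if "Inr B \<in> bridge_path s x y" for B
    using that unfolding bridge_blossom_def node_set_def by force
  moreover have "z \<in> bridge_blossom s x y" if "Inl z \<in> bridge_path s x y" for z
    using that unfolding bridge_blossom_def node_set_def by force
  ultimately show ?thesis
    using bridge_blossom_subset[OF assms] unfolding evenV_def labels_merge by blast
qed

lemma inS_merge:
  assumes "bridge_path s x y \<subseteq> nodes s"
  shows "inS (merge s x y) = inS s"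
  using assms unfolding inS_def evenV_merge[OF assms] labels_merge by (auto simp: oddV_def)

lemma bridge_path_wf:
  assumes "parent_closed s" "ranked s h" "pairwise disjnt (blossoms s)"
    and "bridge_enabled E M s x y" "same_tree s x y"
  shows "bridge_path s x y \<subseteq> nodes s" "Inr (blossom_of s x) \<in> bridge_path s x y"
    "bridge_top s x y \<in> bridge_path s x y" "\<And>p. p \<in> bridge_path s x y \<Longrightarrow> h (bridge_top s x y) \<le> h p"
proof -
  let ?a = "Inr (blossom_of s x)" and ?b = "Inr (blossom_of s y)" and ?c = "bridge_top s x y"
  have "x \<in> evenV s" "y \<in> evenV s" using assms(4) unfolding bridge_enabled_def by simp_all
  then have ab: "?a \<in> nodes s" "?b \<in> nodes s"
    using blossom_of_mem(1)[OF assms(3)] unfolding blossoms_def by simp_all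
  obtain d where "anc s ?a d" "anc s ?b d" using assms(5) unfolding same_tree_def by blast
  then have ac: "anc s ?a ?c" "anc s ?b ?c" using anc_lca[OF assms(2)] unfolding bridge_top_def by blast+
  show "bridge_path s x y \<subseteq> nodes s"
    using anc_in_nodes[OF assms(1)] ab unfolding bridge_path_def tpath_def by blast
  show "?a \<in> bridge_path s x y" "?c \<in> bridge_path s x y"
    using ac unfolding bridge_path_def tpath_def by (auto simp: anc_def)
  show "h ?c \<le> h p" if "p \<in> bridge_path s x y" for p
    using that anc_rank_less[OF assms(2), of p ?c] unfolding bridge_path_def tpath_def by fastforce
qed

lemma bridge_blossom_fresh:
  assumes "pairwise disjnt (blossoms s)" "x \<in> evenV s" "Inr (blossom_of s x) \<in> bridge_path s x y"
  shows "Inr (bridge_blossom s x y) \<notin> nodes s - bridge_path s x y"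
proof
  assume N: "Inr (bridge_blossom s x y) \<in> nodes s - bridge_path s x y"
  have "x \<in> bridge_blossom s x y"
    using assms(3) blossom_of_mem(2)[OF assms(1,2)] unfolding bridge_blossom_def node_set_def by force
  then have "bridge_blossom s x y = blossom_of s x"
    using N blossom_of_eq[OF assms(1)] unfolding blossoms_def by force
  with N assms(3) show False by simp
qed

lemma forest_merge:
  assumes pc: "parent_closed s" and rk: "ranked s h" and dj: "pairwise disjnt (blossoms s)"
    and en: "bridge_enabled E M s x y" and same: "same_tree s x y"
  defines "N \<equiv> Inr (bridge_blossom s x y)"
  shows "parent_closed (merge s x y)"
    "ranked (merge s x y) (\<lambda>n. if n = N then h (bridge_top s x y) else h n)"
proof -
  let ?P = "bridge_path s x y" and ?c = "bridge_top s x y"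
  let ?h = "\<lambda>n. if n = N then h ?c else h n"
  note P = bridge_path_wf[OF pc rk dj en same]
  have fresh: "N \<notin> nodes s - ?P"
    using bridge_blossom_fresh[OF dj _ P(2)] en unfolding N_def bridge_enabled_def by blast
  have old: "q \<in> nodes s \<and> h q < h p" if "p \<in> nodes s" "par s p = Some q" for p q
    using pc rk that unfolding parent_closed_def ranked_def by blast
  have step: "q \<in> nodes (merge s x y) \<and> ?h q < ?h p"
    if p: "p \<in> nodes (merge s x y)" "par (merge s x y) p = Some q" for p q
  proof (cases "p = N")
    case True
    then have "par s ?c = Some q" using p(2) unfolding N_def by simp
    then have "q \<in> nodes s" "h q < h ?c" using old P(1,3) by blast+
    moreover from this have "q \<notin> ?P" using P(4) by fastforce
    ultimately show ?thesis using True fresh unfolding N_def by auto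
  next
    case False
    then have pn: "p \<in> nodes s" "p \<notin> ?P" using p(1) unfolding N_def by auto
    then obtain r where r: "par s p = Some r" using p(2) False unfolding N_def by fastforce
    then have "r \<in> nodes s" "h r < h p" using old pn(1) by blast+
    moreover have "q = (if r \<in> ?P then N else r)" using p(2) False r unfolding N_def by auto
    ultimately show ?thesis using P(4) False pn fresh unfolding N_def by fastforce
  qed
  then show "parent_closed (merge s x y)" "ranked (merge s x y) ?h"
    unfolding parent_closed_def ranked_def by blast+
qed

lemma lcp_merge_on_path:
  assumes "bridge_enabled E M s x y" "lcpo s z < delta s" "Inl z \<in> bridge_path s x y"
  shows "lcp (merge s x y) z + lcpo s z + 1 = 2 * delta s"
  using assms unfolding bridge_enabled_def by simp

lemma bridge_blossom_disjnt:
  assumes "bridge_path s x y \<subseteq> nodes s" "labels_disjoint s"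
    and "B \<in> blossoms s" "Inr B \<notin> bridge_path s x y"
  shows "disjnt (bridge_blossom s x y) B"
proof -
  have "node_set n \<inter> B = {}" if n: "n \<in> bridge_path s x y" for n
  proof (cases n)
    case (Inl z)
    have "z \<in> oddV s" using n Inl assms(1) unfolding oddV_def by auto
    moreover have "B \<subseteq> evenV s" using assms(3) unfolding evenV_def by blast
    ultimately show ?thesis using assms(2) Inl unfolding labels_disjoint_def node_set_def by auto
  next
    case (Inr B')
    have "B' \<in> blossoms s" "B' \<noteq> B" using n Inr assms(1,4) unfolding blossoms_def by auto
    then show ?thesis
      using assms(2,3) Inr unfolding labels_disjoint_def pairwise_def disjnt_def node_set_def by auto
  qed
  then show ?thesis unfolding bridge_blossom_def disjnt_def Union_disjoint by blast
qed

lemma invar_merge: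
  assumes inv: "invar V E M s" and en: "bridge_enabled E M s x y" and same: "same_tree s x y"
  shows "invar V E M (merge s x y)"
proof -
  let ?s' = "merge s x y" and ?P = "bridge_path s x y"
  let ?Z = "{z. Inl z \<in> ?P}"
  from inv obtain h where pc: "parent_closed s" and rk: "ranked s h" and ld: "labels_disjoint s"
    and lw: "lcp_wf s" and sm: "S_mate_closed V M s" and sc: "scanned_closed E s"
    and ob: "odd_lcpo_bound E s" unfolding invar_def by blast
  have dj: "pairwise disjnt (blossoms s)" using ld unfolding labels_disjoint_def ..
  have Pn: "?P \<subseteq> nodes s" using bridge_path_wf(1)[OF pc rk dj en same] .
  have lcpo_less: "lcpo s z < delta s" for z using lw unfolding lcp_wf_def by blast
  have Z_odd: "?Z \<subseteq> oddV s" using Pn unfolding oddV_def by auto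
  have Z_lcp: "lcp ?s' z + lcpo s z + 1 = 2 * delta s" if "z \<in> ?Z" for z
    using lcp_merge_on_path[OF en lcpo_less] that by simp
  \<comment> \<open>vertices that become even get lcp at least Delta, so they are neither scanned nor too small\<close>
  have Z_big: "delta s \<le> lcp ?s' z" if "z \<in> ?Z" for z
    using Z_lcp[OF that] lcpo_less[of z] by simp
  have forest: "parent_closed ?s'" "\<exists>h. ranked ?s' h"
    using forest_merge[OF pc rk dj en same] by blast+
  have "labels_disjoint ?s'"
  proof -
    have "(oddV s - ?Z) \<inter> (evenV s \<union> ?Z) = {}" using ld unfolding labels_disjoint_def by blast
    moreover have "pairwise disjnt {B \<in> blossoms s. Inr B \<notin> ?P}"
      using dj by (rule pairwise_subset) blast
    moreover have "disjnt (bridge_blossom s x y) B \<and> disjnt B (bridge_blossom s x y)"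
      if "B \<in> blossoms s" "Inr B \<notin> ?P" for B
      using bridge_blossom_disjnt[OF Pn ld that] by (simp add: disjnt_sym)
    ultimately show ?thesis
      unfolding labels_disjoint_def evenV_merge[OF Pn] labels_merge pairwise_insert by blast
  qed
  moreover have "lcp_wf ?s'"
    unfolding lcp_wf_def evenV_merge[OF Pn] labels_merge
  proof (intro conjI ballI allI)
    fix u assume u: "u \<in> evenV s \<union> ?Z"
    show "even (lcp ?s' u)"
    proof (cases "u \<in> ?Z")
      case True
      then have "odd (lcpo s u)" using lw Z_odd unfolding lcp_wf_def by blast
      with Z_lcp[OF True] show ?thesis by (metis even_add even_mult_iff even_numeral odd_one)
    next
      case False
      with u lw show ?thesis unfolding lcp_wf_def by simp
    qed
  qed (use lw in \<open>auto simp: lcp_wf_def\<close>)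
  moreover have "S_mate_closed V M ?s'"
    using sm unfolding S_mate_closed_def inS_merge[OF Pn] .
  moreover have "scanned_closed E ?s'"
    unfolding scanned_closed_def evenV_merge[OF Pn] inS_merge[OF Pn]
  proof (intro ballI impI)
    fix u assume u: "u \<in> evenV s \<union> ?Z" and "scanned ?s' u"
    then have "u \<notin> ?Z" using Z_big[of u] unfolding scanned_def by auto
    with \<open>scanned ?s' u\<close> have "scanned s u" unfolding scanned_def by simp
    with u \<open>u \<notin> ?Z\<close> sc show "\<forall>w. {u, w} \<in> E \<longrightarrow> w \<in> inS s"
      unfolding scanned_closed_def by blast
  qed
  moreover have "odd_lcpo_bound E ?s'"
    unfolding odd_lcpo_bound_def evenV_merge[OF Pn] labels_merge
  proof (intro ballI impI)
    fix u v assume u: "u \<in> evenV s \<union> ?Z" and v: "v \<in> oddV s - ?Z" and "{u, v} \<in> E"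
    show "lcpo ?s' v \<le> lcp ?s' u + 1"
    proof (cases "u \<in> ?Z")
      case True
      with Z_big[OF True] lcpo_less[of v] show ?thesis by simp
    next
      case False
      with u v \<open>{u, v} \<in> E\<close> ob show ?thesis unfolding odd_lcpo_bound_def by simp
    qed
  qed
  ultimately show ?thesis using forest unfolding invar_def by blast
qed

lemma reachable_invar:
  assumes "graph V E" "matching E M" "reachable V E M s"
  shows "invar V E M s"
  using assms(3)
proof (induction rule: reachable.induct)
  case start
  show ?case by (rule invar_init)
next
  case (continue s s')
  from continue.hyps(2) show ?case
  proof (cases rule: step.cases)
    case (growth v x)
    then show ?thesis using invar_grow[OF assms(1,2) continue.IH] by blast
  next
    case growth_done
    then show ?thesis using invar_growth_done[OF continue.IH] by blast
  next
    case (bridge_stop x y)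
    then show ?thesis using invar_stop[OF continue.IH] by blast
  next
    case (bridge_merge x y)
    then show ?thesis using invar_merge[OF continue.IH] by blast
  next
    case next_phase
    then show ?thesis using invar_next_phase[OF continue.IH] by blast
  qed
qed

lemma lcp_merge_edge_bound:
  assumes lw: "lcp_wf s" and ob: "odd_lcpo_bound E s" and en: "bridge_enabled E M s x y"
    and vP: "Inl v \<in> bridge_path s x y" and "v \<in> oddV s" "{u, v} \<in> E" "u \<in> evenV s"
  shows "lcp s x + lcp s y \<le> lcp (merge s x y) v + lcp (merge s x y) u"
proof -
  have lcpo_less: "lcpo s z < delta s" for z using lw unfolding lcp_wf_def by blast
  have xy: "lcp s x + lcp s y + 2 = 2 * delta s" using en unfolding bridge_enabled_def by simp
  have v: "lcp (merge s x y) v + lcpo s v + 1 = 2 * delta s"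
    using lcp_merge_on_path[OF en lcpo_less vP] .
  show ?thesis
  proof (cases "Inl u \<in> bridge_path s x y")
    case True
    then have "lcp (merge s x y) u + lcpo s u + 1 = 2 * delta s"
      using lcp_merge_on_path[OF en lcpo_less] by simp
    with xy v lcpo_less[of u] lcpo_less[of v] show ?thesis by linarith
  next
    case False
    then have "lcp (merge s x y) u = lcp s u" by simp
    moreover have "lcpo s v \<le> lcp s u + 1"
      using ob assms(5-7) unfolding odd_lcpo_bound_def by blast
    ultimately show ?thesis using xy v by linarith
  qed
qed

theorem lemma3:
  fixes V :: "'a set" and E M :: "'a set set" and s s' :: "'a sstate" and x y u v :: 'a
  assumes "graph V E" and "matching E M"
    and "reachable V E M s"
    and "stg s = Bridge"
    and "bridge_enabled E M s x y"
    and "same_tree s x y"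
    and "s' = merge s x y"
    and "v \<in> oddV s"
    and "Inl v \<in> tpath s (Inr (blossom_of s y))
                   (lca s (Inr (blossom_of s x)) (Inr (blossom_of s y)))"
    and "{u, v} \<in> E" and "{u, v} \<notin> M"
    and "u \<in> evenV s"
  shows "v \<in> evenV s' \<and> lcp s x + lcp s y \<le> lcp s' v + lcp s' u"
proof -
  obtain h where pc: "parent_closed s" and rk: "ranked s h" and ld: "labels_disjoint s"
    and lw: "lcp_wf s" and ob: "odd_lcpo_bound E s"
    using reachable_invar[OF assms(1-3)] unfolding invar_def by blast
  have "pairwise disjnt (blossoms s)" using ld unfolding labels_disjoint_def ..
  then have Pn: "bridge_path s x y \<subseteq> nodes s" by (rule bridge_path_wf(1)[OF pc rk _ assms(5,6)])
  have vP: "Inl v \<in> bridge_path s x y"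
    using assms(9) unfolding bridge_path_def bridge_top_def by blast
  then have "v \<in> evenV s'" unfolding assms(7) evenV_merge[OF Pn] by blast
  moreover have "lcp s x + lcp s y \<le> lcp s' v + lcp s' u"
    using lcp_merge_edge_bound[OF lw ob assms(5) vP assms(8,10,12)] assms(7) by simp
  ultimately show ?thesis ..
qed

end
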